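(* Let $\mathcal{C}=(\mathcal{T},\mathcal{I},\mathcal{R})$ be an extraction context with thresholds \textit{minsupp} and \textit{minbond}. Then $\mathcal{M}in\mathcal{MCR}=\mathcal{CRCP}\cup\mathcal{M}in\mathcal{MRCP}$, with each element $J$ recorded together with $\mathit{Supp}(\wedge J)$ and $\mathit{bond}(J)$, is an exact concise representation of the set $\mathcal{RCP}$ of rare correlated patterns.
   Context: An extraction context is a triple $\mathcal{C}=(\mathcal{T},\mathcal{I},\mathcal{R})$ with $\mathcal{T}$ a finite set of transactions, $\mathcal{I}$ a finite set of items and $\mathcal{R}\subseteq\mathcal{T}\times\mathcal{I}$. For a pattern $I\subseteq\mathcal{I}$: $\mathit{Supp}(\wedge I)=|\{t:\forall i\in I,(t,i)\in\mathcal{R}\}|$, $\mathit{Supp}(\vee I)=|\{t:\exists i\in I,(t,i)\in\mathcal{R}\}|$, and for nonempty $I$, $\mathit{bond}(I)=\mathit{Supp}(\wedge I)/\mathit{Supp}(\vee I)$ (with $\mathit{bond}(\emptyset)=+\infty$ by convention). $\mathcal{RCP}=\{I\subseteq\mathcal{I}:\mathit{Supp}(\wedge I)<\textit{minsupp},\ \mathit{bond}(I)\ge\textit{minbond}\}$. $\mathcal{CRCP}=\{I\in\mathcal{RCP}:\forall I_1\supsetneq I,\ \mathit{bond}(I)>\mathit{bond}(I_1)\}$; $\mathcal{MRCP}=\{I\in\mathcal{RCP}:\forall I_1\subsetneq I,\ \mathit{bond}(I)<\mathit{bond}(I_1)\}$. Minimal rare patterns: $\mathcal{M}in\mathcal{RP}$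 is the set of patterns $I$ with $\mathit{Supp}(\wedge I)<\textit{minsupp}$ such that every proper subset $I_1\subsetneq I$ satisfies $\mathit{Supp}(\wedge I_1)\ge\textit{minsupp}$. $\mathcal{M}in\mathcal{MRCP}=\mathcal{MRCP}\cap\mathcal{M}in\mathcal{RP}$. A family $\mathcal{S}\subseteq\mathcal{RCP}$, with each $J\in\mathcal{S}$ recorded together with $\mathit{Supp}(\wedge J)$ and $\mathit{bond}(J)$, is an exact concise representation of $\mathcal{RCP}$ if, for every pattern $I\subseteq\mathcal{I}$, the recorded data alone suffice to decide whether $I\in\mathcal{RCP}$ and, when $I\in\mathcal{RCP}$, to determine exactly $\mathit{Supp}(\wedge I)$ and $\mathit{bond}(I)$. *)

theory Defs
  imports Main "HOL-Library.Extended_Real"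
begin

definition extraction_context :: "'t set \<Rightarrow> 'i set \<Rightarrow> ('t \<times> 'i) set \<Rightarrow> bool" where
  "extraction_context T Is R \<longleftrightarrow> finite T \<and> finite Is \<and> R \<subseteq> T \<times> Is"

definition supp_conj :: "'t set \<Rightarrow> ('t \<times> 'i) set \<Rightarrow> 'i set \<Rightarrow> nat" where
  "supp_conj T R I = card {t \<in> T. \<forall>i \<in> I. (t, i) \<in> R}"

definition supp_disj :: "'t set \<Rightarrow> ('t \<times> 'i) set \<Rightarrow> 'i set \<Rightarrow> nat" where
  "supp_disj T R I = card {t \<in> T. \<exists>i \<in> I. (t, i) \<in> R}"

text \<open>bond(empty) = +infinity; otherwise Supp(and I)/Supp(or I) (Isabelle's x/0 = 0 convention
  applies in the degenerate case Supp(or I) = 0).\<close>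
definition bond :: "'t set \<Rightarrow> ('t \<times> 'i) set \<Rightarrow> 'i set \<Rightarrow> ereal" where
  "bond T R I = (if I = {} then \<infinity>
     else ereal (real (supp_conj T R I) / real (supp_disj T R I)))"

definition RCP :: "'t set \<Rightarrow> 'i set \<Rightarrow> ('t \<times> 'i) set \<Rightarrow> nat \<Rightarrow> real \<Rightarrow> 'i set set" where
  "RCP T Is R minsupp minbond =
     {I. I \<subseteq> Is \<and> supp_conj T R I < minsupp \<and> bond T R I \<ge> ereal minbond}"

definition CRCP :: "'t set \<Rightarrow> 'i set \<Rightarrow> ('t \<times> 'i) set \<Rightarrow> nat \<Rightarrow> real \<Rightarrow> 'i set set" where
  "CRCP T Is R minsupp minbond =
     {I \<in> RCP T Is R minsupp minbond.
        \<forall>I1. I \<subset> I1 \<and> I1 \<subseteq> Is \<longrightarrow> bond T R I > bond T R I1}"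

definition MRCP :: "'t set \<Rightarrow> 'i set \<Rightarrow> ('t \<times> 'i) set \<Rightarrow> nat \<Rightarrow> real \<Rightarrow> 'i set set" where
  "MRCP T Is R minsupp minbond =
     {I \<in> RCP T Is R minsupp minbond. \<forall>I1. I1 \<subset> I \<longrightarrow> bond T R I < bond T R I1}"

definition MinRP :: "'t set \<Rightarrow> 'i set \<Rightarrow> ('t \<times> 'i) set \<Rightarrow> nat \<Rightarrow> 'i set set" where
  "MinRP T Is R minsupp =
     {I. I \<subseteq> Is \<and> supp_conj T R I < minsupp \<and> (\<forall>I1. I1 \<subset> I \<longrightarrow> supp_conj T R I1 \<ge> minsupp)}"

definition MinMRCP :: "'t set \<Rightarrow> 'i set \<Rightarrow> ('t \<times> 'i) set \<Rightarrow> nat \<Rightarrow> real \<Rightarrow> 'i set set" where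
  "MinMRCP T Is R minsupp minbond = MRCP T Is R minsupp minbond \<inter> MinRP T Is R minsupp"

definition MinMCR :: "'t set \<Rightarrow> 'i set \<Rightarrow> ('t \<times> 'i) set \<Rightarrow> nat \<Rightarrow> real \<Rightarrow> 'i set set" where
  "MinMCR T Is R minsupp minbond = CRCP T Is R minsupp minbond \<union> MinMRCP T Is R minsupp minbond"

definition recorded :: "'t set \<Rightarrow> ('t \<times> 'i) set \<Rightarrow> 'i set set \<Rightarrow> ('i set \<times> nat \<times> ereal) set" where
  "recorded T R S = {(J, supp_conj T R J, bond T R J) | J. J \<in> S}"

definition exact_concise_rep ::
  "('t set \<Rightarrow> 'i set \<Rightarrow> ('t \<times> 'i) set \<Rightarrow> nat \<Rightarrow> real \<Rightarrow> 'i set set) \<Rightarrow> bool" where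
  "exact_concise_rep F \<longleftrightarrow>
     (\<forall>T Is R minsupp minbond. extraction_context T Is R \<longrightarrow>
        F T Is R minsupp minbond \<subseteq> RCP T Is R minsupp minbond) \<and>
     (\<exists>Dec :: nat \<Rightarrow> real \<Rightarrow> ('i set \<times> nat \<times> ereal) set \<Rightarrow> 'i set \<Rightarrow> (nat \<times> ereal) option.
        \<forall>T Is R minsupp minbond. extraction_context T Is R \<longrightarrow>
          (\<forall>I. I \<subseteq> Is \<longrightarrow>
             Dec minsupp minbond (recorded T R (F T Is R minsupp minbond)) I =
               (if I \<in> RCP T Is R minsupp minbond
                then Some (supp_conj T R I, bond T R I) else None)))"

end

theory Submission
  imports Defs
begin

text \<open>Along an inclusion \<open>I \<subseteq> J\<close> the conjunctive support decreases and the disjunctive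
  support increases, so the bond is antitone, and equal bonds force equal conjunctive supports.
  Hence a rare correlated pattern \<open>I\<close> is sandwiched between a minimal rare pattern below it
  (which lies in \<open>MinMRCP\<close>) and its closure above it (a maximal superset with the same bond,
  which lies in \<open>CRCP\<close>); conversely any pattern sandwiched between two members of the
  representation is rare and correlated. The bond of \<open>I\<close> is then the largest bond recorded for
  a superset of \<open>I\<close>, and a superset attaining it carries the conjunctive support of \<open>I\<close>.\<close>

lemma supp_conj_antimono: "finite T \<Longrightarrow> I \<subseteq> J \<Longrightarrow> supp_conj T R J \<le> supp_conj T R I"
  unfolding supp_conj_def by (rule card_mono) auto

lemma supp_disj_mono: "finite T \<Longrightarrow> I \<subseteq> J \<Longrightarrow> supp_disj T R I \<le> supp_disj T R J"
  unfolding supp_disj_def by (rule card_mono) auto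

lemma supp_conj_le_supp_disj: "finite T \<Longrightarrow> I \<noteq> {} \<Longrightarrow> supp_conj T R I \<le> supp_disj T R I"
  unfolding supp_conj_def supp_disj_def by (rule card_mono) auto

lemma bond_antimono:
  assumes T: "finite T" and IJ: "I \<subseteq> J"
  shows "bond T R J \<le> bond T R I"
proof (cases "I = {}")
  case True
  then show ?thesis by (simp add: bond_def)
next
  case False
  with IJ have "J \<noteq> {}" by auto
  have conj: "supp_conj T R J \<le> supp_conj T R I" using supp_conj_antimono[OF T IJ] .
  have disj: "supp_disj T R I \<le> supp_disj T R J" using supp_disj_mono[OF T IJ] .
  have "supp_conj T R I \<le> supp_disj T R I" using supp_conj_le_supp_disj[OF T False] .
  with conj disj have "real (supp_conj T R J) / real (supp_disj T R J)
      \<le> real (supp_conj T R I) / real (supp_disj T R I)"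
    by (cases "supp_disj T R I = 0") (auto intro: frac_le)
  with False \<open>J \<noteq> {}\<close> show ?thesis by (simp add: bond_def)
qed

lemma supp_conj_eq_if_bond_eq:
  assumes T: "finite T" and IJ: "I \<subseteq> J" and eq: "bond T R J = bond T R I"
  shows "supp_conj T R J = supp_conj T R I"
proof (cases "I = {}")
  case True
  with eq have "J = {}" by (auto simp: bond_def split: if_splits)
  with True show ?thesis by simp
next
  case False
  with IJ have "J \<noteq> {}" by auto
  have conj: "supp_conj T R J \<le> supp_conj T R I" using supp_conj_antimono[OF T IJ] .
  have disj: "supp_disj T R I \<le> supp_disj T R J" using supp_disj_mono[OF T IJ] .
  show ?thesis
  proof (rule ccontr)
    assume "supp_conj T R J \<noteq> supp_conj T R I"
    with conj have less: "supp_conj T R J < supp_conj T R I" by simp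
    moreover have "supp_conj T R I \<le> supp_disj T R I"
      using supp_conj_le_supp_disj[OF T False] .
    ultimately have pos: "0 < supp_disj T R I" by simp
    have "real (supp_conj T R J) / real (supp_disj T R J)
        < real (supp_conj T R I) / real (supp_disj T R J)"
      using less disj pos by (simp add: divide_strict_right_mono)
    also have "\<dots> \<le> real (supp_conj T R I) / real (supp_disj T R I)"
      using disj pos by (simp add: divide_left_mono)
    finally show False using eq False \<open>J \<noteq> {}\<close> by (simp add: bond_def)
  qed
qed

lemma bond_less_if_supp_conj_less:
  assumes T: "finite T" and IJ: "I \<subseteq> J" and less: "supp_conj T R J < supp_conj T R I"
  shows "bond T R J < bond T R I"
proof -
  have "bond T R J \<le> bond T R I" using bond_antimono[OF T IJ] .
  moreover have "bond T R J \<noteq> bond T R I"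
    using supp_conj_eq_if_bond_eq[OF T IJ] less by auto
  ultimately show ?thesis by simp
qed

lemma RCP_has_closed_superset:
  assumes ctx: "extraction_context T Is R" and I: "I \<in> RCP T Is R minsupp minbond"
  obtains J where "J \<in> CRCP T Is R minsupp minbond" "I \<subseteq> J" "bond T R J = bond T R I"
proof -
  have T: "finite T" and Is: "finite Is" using ctx by (auto simp: extraction_context_def)
  let ?same = "{J \<in> Pow Is. bond T R J = bond T R I}"
  have fin: "finite ?same" using Is by simp
  have mem: "I \<in> ?same" using I by (simp add: RCP_def)
  obtain J where J: "J \<in> ?same" "I \<subseteq> J"
    and maximal: "\<forall>J' \<in> ?same. J \<subseteq> J' \<longrightarrow> J = J'"
    using finite_has_maximal2[OF fin mem] by (elim bexE conjE)
  have "supp_conj T R J \<le> supp_conj T R I" using supp_conj_antimono[OF T J(2)] .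
  with I J have "J \<in> RCP T Is R minsupp minbond" by (auto simp: RCP_def)
  moreover have "bond T R J > bond T R J'" if "J \<subset> J'" "J' \<subseteq> Is" for J'
  proof -
    have "bond T R J' \<le> bond T R J" using bond_antimono[OF T psubset_imp_subset[OF that(1)]] .
    moreover have "J' \<notin> ?same" using maximal that by blast
    ultimately show ?thesis using that J by auto
  qed
  ultimately have "J \<in> CRCP T Is R minsupp minbond" unfolding CRCP_def by blast
  with J that show ?thesis by blast
qed

lemma rare_has_MinRP_subset:
  assumes "finite I" "I \<subseteq> Is" "supp_conj T R I < minsupp"
  obtains K where "K \<in> MinRP T Is R minsupp" "K \<subseteq> I"
proof -
  let ?rare = "{K \<in> Pow I. supp_conj T R K < minsupp}"
  have fin: "finite ?rare" using assms(1) by simp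
  have mem: "I \<in> ?rare" using assms(3) by simp
  obtain K where K: "K \<in> ?rare" and minimal: "\<forall>K' \<in> ?rare. K' \<subseteq> K \<longrightarrow> K = K'"
    using finite_has_minimal2[OF fin mem] by (elim bexE conjE)
  have "minsupp \<le> supp_conj T R K'" if "K' \<subset> K" for K'
  proof -
    have "K' \<notin> ?rare" using minimal that by blast
    moreover have "K' \<in> Pow I" using K that by auto
    ultimately show ?thesis by simp
  qed
  with K assms(2) have "K \<in> MinRP T Is R minsupp" by (auto simp: MinRP_def)
  with K that show ?thesis by blast
qed

lemma MinRP_below_RCP_in_MinMRCP:
  assumes T: "finite T" and K: "K \<in> MinRP T Is R minsupp" and KI: "K \<subseteq> I"
    and I: "I \<in> RCP T Is R minsupp minbond"
  shows "K \<in> MinMRCP T Is R minsupp minbond"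
proof -
  have "bond T R I \<le> bond T R K" using bond_antimono[OF T KI] .
  with K I have "K \<in> RCP T Is R minsupp minbond" by (auto simp: RCP_def MinRP_def)
  moreover have "bond T R K < bond T R K'" if "K' \<subset> K" for K'
  proof -
    have "supp_conj T R K < minsupp" "minsupp \<le> supp_conj T R K'"
      using K that unfolding MinRP_def by blast+
    then have "supp_conj T R K < supp_conj T R K'" by (rule less_le_trans)
    with that show ?thesis by (intro bond_less_if_supp_conj_less[OF T]) auto
  qed
  ultimately show ?thesis using K by (auto simp: MinMRCP_def MRCP_def)
qed

lemma MinMCR_subset_RCP: "MinMCR T Is R minsupp minbond \<subseteq> RCP T Is R minsupp minbond"
  by (auto simp: MinMCR_def CRCP_def MinMRCP_def MRCP_def)

lemma RCP_iff_between_MinMCR: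
  assumes ctx: "extraction_context T Is R" and I: "I \<subseteq> Is"
  shows "I \<in> RCP T Is R minsupp minbond \<longleftrightarrow>
    (\<exists>K \<in> MinMCR T Is R minsupp minbond. K \<subseteq> I) \<and> (\<exists>J \<in> MinMCR T Is R minsupp minbond. I \<subseteq> J)"
    (is "_ \<longleftrightarrow> ?between")
proof -
  have T: "finite T" and Is: "finite Is" using ctx by (auto simp: extraction_context_def)
  show ?thesis
  proof
    assume rcp: "I \<in> RCP T Is R minsupp minbond"
    obtain J where "J \<in> CRCP T Is R minsupp minbond" "I \<subseteq> J"
      using RCP_has_closed_superset[OF ctx rcp] .
    moreover obtain K where K: "K \<in> MinRP T Is R minsupp" "K \<subseteq> I"
    proof (rule rare_has_MinRP_subset)
      show "finite I" using Is I by (rule finite_subset[rotated])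
      show "supp_conj T R I < minsupp" using rcp by (simp add: RCP_def)
    qed (use I in auto)
    moreover have "K \<in> MinMRCP T Is R minsupp minbond"
      using MinRP_below_RCP_in_MinMRCP[OF T K rcp] .
    ultimately show ?between unfolding MinMCR_def by blast
  next
    assume ?between
    then obtain K J where K: "K \<in> MinMCR T Is R minsupp minbond" "K \<subseteq> I"
      and J: "J \<in> MinMCR T Is R minsupp minbond" "I \<subseteq> J" by blast
    have "supp_conj T R I < minsupp"
      using K MinMCR_subset_RCP supp_conj_antimono[OF T K(2), of R] by (force simp: RCP_def)
    moreover have "ereal minbond \<le> bond T R I"
      using J MinMCR_subset_RCP bond_antimono[OF T J(2), of R] by (force simp: RCP_def)
    ultimately show "I \<in> RCP T Is R minsupp minbond" using I by (simp add: RCP_def)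
  qed
qed

lemma mem_recorded_iff:
  "(J, s, b) \<in> recorded T R S \<longleftrightarrow> J \<in> S \<and> s = supp_conj T R J \<and> b = bond T R J"
  by (auto simp: recorded_def)

lemma bex_recorded_iff: "(\<exists>(J, s, b) \<in> recorded T R S. P J) \<longleftrightarrow> (\<exists>J \<in> S. P J)"
  by (auto simp: recorded_def)

definition max_bond_superset_data :: "('i set \<times> nat \<times> ereal) set \<Rightarrow> 'i set \<Rightarrow> nat \<times> ereal" where
  "max_bond_superset_data D I =
     (THE p. \<exists>J. (J, p) \<in> D \<and> I \<subseteq> J \<and> (\<forall>(J', s', b') \<in> D. I \<subseteq> J' \<longrightarrow> b' \<le> snd p))"

definition decode :: "('i set \<times> nat \<times> ereal) set \<Rightarrow> 'i set \<Rightarrow> (nat \<times> ereal) option" where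
  "decode D I =
     (if (\<exists>(K, s, b) \<in> D. K \<subseteq> I) \<and> (\<exists>(J, s, b) \<in> D. I \<subseteq> J)
      then Some (max_bond_superset_data D I) else None)"

lemma max_bond_superset_data_recorded:
  assumes T: "finite T" and J0: "J0 \<in> S" "I \<subseteq> J0" "bond T R J0 = bond T R I"
  shows "max_bond_superset_data (recorded T R S) I = (supp_conj T R I, bond T R I)"
  unfolding max_bond_superset_data_def
proof (rule the_equality)
  let ?D = "recorded T R S"
  have bond_le: "b' \<le> bond T R I" if "(J', s', b') \<in> ?D" "I \<subseteq> J'" for J' s' b'
    using that(1) bond_antimono[OF T that(2)] by (simp add: mem_recorded_iff)
  have J0_recorded: "(J0, supp_conj T R I, bond T R I) \<in> ?D"
    using J0 supp_conj_eq_if_bond_eq[OF T J0(2,3)] by (simp add: mem_recorded_iff)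
  show "\<exists>J. (J, supp_conj T R I, bond T R I) \<in> ?D \<and> I \<subseteq> J \<and>
      (\<forall>(J', s', b') \<in> ?D. I \<subseteq> J' \<longrightarrow> b' \<le> snd (supp_conj T R I, bond T R I))"
    using J0_recorded J0(2) bond_le by auto
  fix p
  assume "\<exists>J. (J, p) \<in> ?D \<and> I \<subseteq> J \<and> (\<forall>(J', s', b') \<in> ?D. I \<subseteq> J' \<longrightarrow> b' \<le> snd p)"
  then obtain J where J: "(J, p) \<in> ?D" "I \<subseteq> J"
    and maximal: "\<forall>(J', s', b') \<in> ?D. I \<subseteq> J' \<longrightarrow> b' \<le> snd p"
    by blast
  obtain s b where p: "p = (s, b)" by (cases p)
  have "bond T R I \<le> b" using maximal J0_recorded J0(2) p by auto
  moreover have "b \<le> bond T R I" using bond_le J p by simp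
  ultimately have "b = bond T R I" by (rule antisym[rotated])
  with J p show "p = (supp_conj T R I, bond T R I)"
    using supp_conj_eq_if_bond_eq[OF T J(2)] by (simp add: mem_recorded_iff)
qed

lemma decode_recorded_MinMCR:
  assumes ctx: "extraction_context T Is R" and I: "I \<subseteq> Is"
  shows "decode (recorded T R (MinMCR T Is R minsupp minbond)) I =
    (if I \<in> RCP T Is R minsupp minbond then Some (supp_conj T R I, bond T R I) else None)"
proof (cases "I \<in> RCP T Is R minsupp minbond")
  case False
  then show ?thesis
    using RCP_iff_between_MinMCR[OF ctx I] by (auto simp: decode_def bex_recorded_iff)
next
  case True
  have T: "finite T" using ctx by (simp add: extraction_context_def)
  obtain J0 where J0: "J0 \<in> CRCP T Is R minsupp minbond" "I \<subseteq> J0" "bond T R J0 = bond T R I"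
    using RCP_has_closed_superset[OF ctx True] .
  have "J0 \<in> MinMCR T Is R minsupp minbond" unfolding MinMCR_def using J0(1) by (rule UnI1)
  moreover have "(\<exists>K \<in> MinMCR T Is R minsupp minbond. K \<subseteq> I) \<and>
      (\<exists>J \<in> MinMCR T Is R minsupp minbond. I \<subseteq> J)"
    using True RCP_iff_between_MinMCR[OF ctx I] by blast
  ultimately show ?thesis
    using True J0(2,3) by (simp add: decode_def bex_recorded_iff max_bond_superset_data_recorded[OF T])
qed

theorem mainTheorem7:
  shows "exact_concise_rep (MinMCR :: 't set \<Rightarrow> 'i set \<Rightarrow> ('t \<times> 'i) set \<Rightarrow> nat \<Rightarrow> real \<Rightarrow> 'i set set)"
  unfolding exact_concise_rep_def
  using MinMCR_subset_RCP decode_recorded_MinMCR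
  by (intro conjI exI[of _ "\<lambda>_ _. decode"]) blast+

end
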